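(* Let $M$ be a simply laced spherical Coxeter diagram, $B$ a set of mutually orthogonal positive roots, $\beta,\gamma\in B$ and $j$ a node of $M$. Then: (i) there is no node $i$ with $(\alpha_i,\beta)=1$, $(\alpha_i,\gamma)=-1$ and $\mathrm{ht}(\beta)=\mathrm{ht}(\gamma)+1$; (ii) if $(\alpha_j,\beta)=-1$, $(\alpha_j,\gamma)=1$ and $\mathrm{ht}(\gamma)=\mathrm{ht}(\beta)+2$, then there is no node $i$ with $\alpha_i\in B^\perp$ and $i\sim j$.
   Context: $M$ has nodes $1,\dots,n$; for distinct nodes, $i\sim j$ means they are joined by an edge. $\Phi^+$ is the set of positive roots of the root system of type $M$, with fundamental roots $\alpha_i$ and inner product normalized by $(\alpha_i,\alpha_i)=2$, $(\alpha_i,\alpha_j)=-1$ if $i\sim j$, $0$ otherwise. The height of $\beta=\sum_k a_k\alpha_k$ is $\mathrm{ht}(\beta)=\sum_k a_k$. $B^\perp$ is the set of roots orthogonal to every element of $B$. *)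

theory Defs
  imports Main
begin

text \<open>A simply laced Coxeter diagram on nodes 1..n is given by a symmetric,
irreflexive adjacency relation adj.  Vectors of the root lattice are
coefficient functions nat => int (coefficient k of alpha_k, k in 1..n).\<close>

definition diagram :: "nat \<Rightarrow> (nat \<Rightarrow> nat \<Rightarrow> bool) \<Rightarrow> bool" where
  "diagram n adj \<longleftrightarrow> (\<forall>i j. adj i j \<longrightarrow> adj j i) \<and> (\<forall>i. \<not> adj i i)
      \<and> (\<forall>i j. adj i j \<longrightarrow> i \<in> {1..n} \<and> j \<in> {1..n})"

definition cartan :: "(nat \<Rightarrow> nat \<Rightarrow> bool) \<Rightarrow> nat \<Rightarrow> nat \<Rightarrow> int" where
  "cartan adj k l = (if k = l then 2 else if adj k l then -1 else 0)"

definition ip :: "nat \<Rightarrow> (nat \<Rightarrow> nat \<Rightarrow> bool) \<Rightarrow> (nat \<Rightarrow> int) \<Rightarrow> (nat \<Rightarrow> int) \<Rightarrow> int" where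
  "ip n adj u v = (\<Sum>k\<in>{1..n}. \<Sum>l\<in>{1..n}. u k * v l * cartan adj k l)"

definition simple_root :: "nat \<Rightarrow> nat \<Rightarrow> int" where
  "simple_root i = (\<lambda>k. if k = i then 1 else 0)"

definition height :: "nat \<Rightarrow> (nat \<Rightarrow> int) \<Rightarrow> int" where
  "height n v = (\<Sum>k\<in>{1..n}. v k)"

definition refl :: "nat \<Rightarrow> (nat \<Rightarrow> nat \<Rightarrow> bool) \<Rightarrow> nat \<Rightarrow> (nat \<Rightarrow> int) \<Rightarrow> (nat \<Rightarrow> int)" where
  "refl n adj i v = (\<lambda>k. v k - ip n adj (simple_root i) v * simple_root i k)"

inductive_set weyl :: "nat \<Rightarrow> (nat \<Rightarrow> nat \<Rightarrow> bool) \<Rightarrow> ((nat \<Rightarrow> int) \<Rightarrow> (nat \<Rightarrow> int)) set"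
  for n adj where
  weyl_id: "id \<in> weyl n adj"
| weyl_step: "w \<in> weyl n adj \<Longrightarrow> i \<in> {1..n} \<Longrightarrow> refl n adj i \<circ> w \<in> weyl n adj"

definition spherical :: "nat \<Rightarrow> (nat \<Rightarrow> nat \<Rightarrow> bool) \<Rightarrow> bool" where
  "spherical n adj \<longleftrightarrow> finite (weyl n adj)"

definition roots :: "nat \<Rightarrow> (nat \<Rightarrow> nat \<Rightarrow> bool) \<Rightarrow> (nat \<Rightarrow> int) set" where
  "roots n adj = {w (simple_root i) | w i. w \<in> weyl n adj \<and> i \<in> {1..n}}"

definition pos_roots :: "nat \<Rightarrow> (nat \<Rightarrow> nat \<Rightarrow> bool) \<Rightarrow> (nat \<Rightarrow> int) set" where
  "pos_roots n adj = {v \<in> roots n adj. \<forall>k. v k \<ge> 0}"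

end

theory Submission
  imports Defs
begin

(* Averaging the dot product over the finite Weyl group gives an invariant positive definite
   form Q. Invariance under the reflection in alpha_k forces
   2 Q(alpha_k, x) = Q(alpha_k, alpha_k) (alpha_k, x), and the factors Q(alpha_k, alpha_k) agree
   along edges of the diagram; splitting a vector along the level sets of these factors shows
   that the form ( , ) is positive definite. Since it is also even, it is at least 2 on nonzero
   vectors, so a vector of norm 2 cannot have coefficients of both signs (its positive and
   negative parts would contribute at least 4) and therefore has nonzero height. Under the
   hypotheses of (i), resp. (ii), beta - alpha_i - gamma, resp. gamma - beta - alpha_i - alpha_j,
   would be a vector of norm 2 and height 0. *)

lemma ip_add_right: "ip n adj x (\<lambda>k. y k + z k) = ip n adj x y + ip n adj x z"
  unfolding ip_def by (simp add: algebra_simps sum.distrib)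

lemma ip_diff_left: "ip n adj (\<lambda>k. x k - y k) z = ip n adj x z - ip n adj y z"
  unfolding ip_def by (simp add: algebra_simps sum_subtractf)

lemma ip_diff_right: "ip n adj x (\<lambda>k. y k - z k) = ip n adj x y - ip n adj x z"
  unfolding ip_def by (simp add: algebra_simps sum_subtractf)

lemma ip_scale_left: "ip n adj (\<lambda>k. a * x k) y = a * ip n adj x y"
  unfolding ip_def by (simp add: algebra_simps sum_distrib_left)

lemma ip_scale_right: "ip n adj x (\<lambda>k. a * y k) = a * ip n adj x y"
  unfolding ip_def by (simp add: algebra_simps sum_distrib_left)

lemma cartan_commute: "diagram n adj \<Longrightarrow> cartan adj k l = cartan adj l k"
  unfolding diagram_def cartan_def by auto

lemma ip_commute: "diagram n adj \<Longrightarrow> ip n adj x y = ip n adj y x"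
  unfolding ip_def by (subst sum.swap) (simp add: cartan_commute ac_simps)

lemma ip_simple_root_left:
  assumes "k \<in> {1..n}"
  shows "ip n adj (simple_root k) y = (\<Sum>l\<in>{1..n}. cartan adj k l * y l)"
proof -
  have "(\<Sum>l\<in>{1..n}. simple_root k k' * y l * cartan adj k' l)
      = (if k' = k then \<Sum>l\<in>{1..n}. cartan adj k l * y l else 0)" for k'
    by (simp add: simple_root_def ac_simps)
  then show ?thesis
    unfolding ip_def using assms by simp
qed

lemma ip_eq_sum_coeffs: "ip n adj x y = (\<Sum>k\<in>{1..n}. x k * ip n adj (simple_root k) y)"
  unfolding ip_def[of n adj x y]
  by (intro sum.cong) (auto simp: ip_simple_root_left sum_distrib_left ac_simps)

lemma ip_simple_roots:
  assumes "k \<in> {1..n}" and "l \<in> {1..n}"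
  shows "ip n adj (simple_root k) (simple_root l) = cartan adj k l"
proof -
  have "cartan adj k m * simple_root l m = (if m = l then cartan adj k l else 0)" for m
    by (simp add: simple_root_def)
  then show ?thesis
    using assms by (simp add: ip_simple_root_left)
qed

lemma ip_simple_root_self: "k \<in> {1..n} \<Longrightarrow> ip n adj (simple_root k) (simple_root k) = 2"
  by (simp add: ip_simple_roots cartan_def)

lemma height_simple_root: "k \<in> {1..n} \<Longrightarrow> height n (simple_root k) = 1"
  unfolding height_def simple_root_def by simp

lemma height_diff: "height n (\<lambda>k. x k - y k) = height n x - height n y"
  unfolding height_def by (simp add: sum_subtractf)

lemma refl_linear:
  "refl n adj i (\<lambda>k. a * x k + b * y k) = (\<lambda>k. a * refl n adj i x k + b * refl n adj i y k)"
  unfolding refl_def by (simp add: ip_add_right ip_scale_right algebra_simps)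

lemma refl_simple_root: "i \<in> {1..n} \<Longrightarrow> refl n adj i (simple_root i) = (\<lambda>k. - simple_root i k)"
  unfolding refl_def by (simp add: ip_simple_root_self)

lemma refl_refl: "i \<in> {1..n} \<Longrightarrow> refl n adj i (refl n adj i x) = x"
  unfolding refl_def[of n adj i "refl n adj i x"]
  by (simp add: refl_def ip_diff_right ip_scale_right ip_simple_root_self)

lemma ip_refl:
  assumes "diagram n adj" and "i \<in> {1..n}"
  shows "ip n adj (refl n adj i x) (refl n adj i y) = ip n adj x y"
  unfolding refl_def using assms
  by (simp only: ip_diff_left ip_diff_right ip_scale_left ip_scale_right ip_simple_root_self)
    (simp add: ip_commute[of n adj x "simple_root i"] algebra_simps)

lemma weyl_linear:
  "w \<in> weyl n adj \<Longrightarrow> w (\<lambda>k. a * x k + b * y k) = (\<lambda>k. a * w x k + b * w y k)"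
  by (induction rule: weyl.induct) (auto simp: refl_linear)

lemma weyl_comp: "w \<in> weyl n adj \<Longrightarrow> v \<in> weyl n adj \<Longrightarrow> w \<circ> v \<in> weyl n adj"
  by (induction rule: weyl.induct) (auto simp: comp_assoc intro: weyl.weyl_step)

lemma refl_in_weyl: "i \<in> {1..n} \<Longrightarrow> refl n adj i \<in> weyl n adj"
  using weyl.weyl_step[OF weyl.weyl_id] by simp

lemma ip_weyl: "w \<in> weyl n adj \<Longrightarrow> diagram n adj \<Longrightarrow> ip n adj (w x) (w y) = ip n adj x y"
  by (induction rule: weyl.induct) (auto simp: ip_refl)

lemma ip_root_self: "v \<in> roots n adj \<Longrightarrow> diagram n adj \<Longrightarrow> ip n adj v v = 2"
  unfolding roots_def by (auto simp: ip_weyl ip_simple_root_self)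

definition inv_form ::
    "nat \<Rightarrow> (nat \<Rightarrow> nat \<Rightarrow> bool) \<Rightarrow> (nat \<Rightarrow> int) \<Rightarrow> (nat \<Rightarrow> int) \<Rightarrow> int" where
  "inv_form n adj x y = (\<Sum>w\<in>weyl n adj. \<Sum>m\<in>{1..n}. w x m * w y m)"

lemma inv_form_commute: "inv_form n adj x y = inv_form n adj y x"
  unfolding inv_form_def by (simp add: mult.commute)

lemma inv_form_linear_left:
  "inv_form n adj (\<lambda>k. a * x k + b * y k) z = a * inv_form n adj x z + b * inv_form n adj y z"
  unfolding inv_form_def
  by (simp add: weyl_linear algebra_simps sum.distrib sum_distrib_left cong: sum.cong)

lemma inv_form_linear_right:
  "inv_form n adj z (\<lambda>k. a * x k + b * y k) = a * inv_form n adj z x + b * inv_form n adj z y"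
  using inv_form_linear_left by (simp add: inv_form_commute)

lemma inv_form_refl:
  assumes "i \<in> {1..n}"
  shows "inv_form n adj (refl n adj i x) (refl n adj i y) = inv_form n adj x y"
proof -
  let ?s = "refl n adj i"
  have "?s \<circ> ?s = id"
    using refl_refl[OF assms] by auto
  then have "bij_betw (\<lambda>w. w \<circ> ?s) (weyl n adj) (weyl n adj)"
    using weyl_comp refl_in_weyl[OF assms]
    by (intro bij_betw_byWitness[where f' = "\<lambda>w. w \<circ> ?s"]) (auto simp: comp_assoc)
  then have "(\<Sum>w\<in>weyl n adj. (\<lambda>w. \<Sum>m\<in>{1..n}. w x m * w y m) (w \<circ> ?s))
      = (\<Sum>w\<in>weyl n adj. \<Sum>m\<in>{1..n}. w x m * w y m)"
    by (rule sum.reindex_bij_betw)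
  then show ?thesis
    by (simp add: inv_form_def)
qed

lemma inv_form_simple_root_left:
  assumes "i \<in> {1..n}"
  shows "2 * inv_form n adj (simple_root i) x
    = inv_form n adj (simple_root i) (simple_root i) * ip n adj (simple_root i) x"
proof -
  let ?e = "simple_root i" and ?a = "ip n adj (simple_root i) x"
  have refl_e: "refl n adj i ?e = (\<lambda>k. (-1) * ?e k + 0 * ?e k)"
    using refl_simple_root[OF assms] by simp
  have refl_x: "refl n adj i x = (\<lambda>k. 1 * x k + (- ?a) * ?e k)"
    by (simp add: refl_def)
  have "inv_form n adj ?e x = inv_form n adj (refl n adj i ?e) (refl n adj i x)"
    using inv_form_refl[OF assms] by simp
  also have "\<dots> = ?a * inv_form n adj ?e ?e - inv_form n adj ?e x"
    unfolding refl_e inv_form_linear_left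
    unfolding refl_x inv_form_linear_right by simp
  finally show ?thesis
    by simp
qed

lemma inv_form_self_nonneg: "inv_form n adj x x \<ge> 0"
  unfolding inv_form_def by (intro sum_nonneg) simp

lemma inv_form_self_pos:
  assumes "spherical n adj" and "m \<in> {1..n}" and "x m \<noteq> 0"
  shows "inv_form n adj x x > 0"
proof -
  have "0 < x m * x m"
    using assms(3) by (auto simp: zero_less_mult_iff linorder_neq_iff)
  also have "\<dots> \<le> (\<Sum>m\<in>{1..n}. x m * x m)"
    using assms(2) by (intro member_le_sum) simp_all
  also have "\<dots> \<le> inv_form n adj x x"
    unfolding inv_form_def using assms(1) weyl.weyl_id
      member_le_sum[of id "weyl n adj" "\<lambda>w. \<Sum>m\<in>{1..n}. w x m * w x m"]
    by (simp add: spherical_def sum_nonneg)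
  finally show ?thesis .
qed

lemma inv_form_sum_left:
  "finite S \<Longrightarrow>
    inv_form n adj (\<lambda>m. \<Sum>k\<in>S. c k * v k m) y = (\<Sum>k\<in>S. c k * inv_form n adj (v k) y)"
proof (induction S rule: finite_induct)
  case empty
  show ?case
    using inv_form_linear_left[of n adj 0 "\<lambda>_. 0" 0 "\<lambda>_. 0" y] by simp
next
  case (insert k S)
  then show ?case
    using inv_form_linear_left[of n adj "c k" "v k" 1 "\<lambda>m. \<Sum>k\<in>S. c k * v k m" y] by simp
qed

lemma eq_sum_simple_roots:
  assumes "\<forall>k. k \<notin> {1..n} \<longrightarrow> x k = 0"
  shows "x = (\<lambda>m. \<Sum>k\<in>{1..n}. x k * simple_root k m)"
proof
  fix m
  have "(\<Sum>k\<in>{1..n}. x k * simple_root k m) = (\<Sum>k\<in>{1..n}. if m = k then x m else 0)"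
    by (intro sum.cong) (auto simp: simple_root_def)
  then show "x m = (\<Sum>k\<in>{1..n}. x k * simple_root k m)"
    using assms by simp
qed

lemma inv_form_eq_sum_coeffs:
  assumes "\<forall>k. k \<notin> {1..n} \<longrightarrow> x k = 0"
  shows "inv_form n adj x y = (\<Sum>k\<in>{1..n}. x k * inv_form n adj (simple_root k) y)"
  by (subst eq_sum_simple_roots[OF assms]) (simp add: inv_form_sum_left)

lemma inv_form_simple_root_self_adjacent:
  assumes "diagram n adj" and "k \<in> {1..n}" and "l \<in> {1..n}" and "cartan adj k l \<noteq> 0"
  shows "inv_form n adj (simple_root k) (simple_root k)
    = inv_form n adj (simple_root l) (simple_root l)"
proof (cases "k = l")
  case False
  then have "cartan adj k l = -1" and "cartan adj l k = -1"
    using assms unfolding cartan_def diagram_def by (auto split: if_splits)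
  then have "2 * inv_form n adj (simple_root k) (simple_root l)
      = - inv_form n adj (simple_root k) (simple_root k)"
    and "2 * inv_form n adj (simple_root l) (simple_root k)
      = - inv_form n adj (simple_root l) (simple_root l)"
    using inv_form_simple_root_left[OF assms(2), of adj "simple_root l"]
      inv_form_simple_root_left[OF assms(3), of adj "simple_root k"]
    by (simp_all add: ip_simple_roots[OF assms(2,3)] ip_simple_roots[OF assms(3,2)])
  then show ?thesis
    by (simp add: inv_form_commute)
qed simp

lemma inv_form_eq_scaled_ip:
  assumes "\<forall>k. k \<notin> {1..n} \<longrightarrow> z k = 0"
    and "\<forall>k\<in>{1..n}. z k \<noteq> 0 \<longrightarrow> inv_form n adj (simple_root k) (simple_root k) = v"
  shows "2 * inv_form n adj z z = v * ip n adj z z"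
proof -
  have "2 * inv_form n adj z z = (\<Sum>k\<in>{1..n}. z k * (2 * inv_form n adj (simple_root k) z))"
    by (simp add: inv_form_eq_sum_coeffs[OF assms(1)] sum_distrib_left algebra_simps)
  also have "\<dots> = (\<Sum>k\<in>{1..n}. z k *
      (inv_form n adj (simple_root k) (simple_root k) * ip n adj (simple_root k) z))"
    by (simp add: inv_form_simple_root_left)
  also have "\<dots> = (\<Sum>k\<in>{1..n}. v * (z k * ip n adj (simple_root k) z))"
    using assms(2) by (intro sum.cong) auto
  also have "\<dots> = v * ip n adj z z"
    by (simp add: ip_eq_sum_coeffs[of n adj z] sum_distrib_left)
  finally show ?thesis .
qed

definition level_part :: "nat \<Rightarrow> (nat \<Rightarrow> 'a) \<Rightarrow> 'a \<Rightarrow> (nat \<Rightarrow> int) \<Rightarrow> nat \<Rightarrow> int" where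
  "level_part n c v x k = (if k \<in> {1..n} \<and> c k = v then x k else 0)"

lemma ip_self_eq_sum_level_parts:
  assumes "\<forall>k\<in>{1..n}. \<forall>l\<in>{1..n}. cartan adj k l \<noteq> 0 \<longrightarrow> c k = c l"
  shows "ip n adj x x = (\<Sum>v\<in>c ` {1..n}. ip n adj (level_part n c v x) (level_part n c v x))"
proof -
  let ?t = "\<lambda>k l. x k * x l * cartan adj k l"
  have "(\<Sum>v\<in>c ` {1..n}. if c k = v \<and> c l = v then ?t k l else 0) = ?t k l"
    if "k \<in> {1..n}" and "l \<in> {1..n}" for k l
  proof (cases "cartan adj k l = 0")
    case False
    then have "c l = c k"
      using assms that by auto
    then show ?thesis
      using that by (simp add: sum.delta')
  next
    case True
    then show ?thesis
      by (simp only: mult_zero_right if_cancel sum.neutral_const)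
  qed
  then have "ip n adj x x = (\<Sum>k\<in>{1..n}. \<Sum>l\<in>{1..n}. \<Sum>v\<in>c ` {1..n}.
      if c k = v \<and> c l = v then ?t k l else 0)"
    unfolding ip_def by simp
  also have "\<dots> = (\<Sum>k\<in>{1..n}. \<Sum>v\<in>c ` {1..n}. \<Sum>l\<in>{1..n}.
      if c k = v \<and> c l = v then ?t k l else 0)"
    by (intro sum.cong refl sum.swap)
  also have "\<dots> = (\<Sum>v\<in>c ` {1..n}. \<Sum>k\<in>{1..n}. \<Sum>l\<in>{1..n}.
      if c k = v \<and> c l = v then ?t k l else 0)"
    by (rule sum.swap)
  also have "\<dots> = (\<Sum>v\<in>c ` {1..n}. ip n adj (level_part n c v x) (level_part n c v x))"
    unfolding ip_def level_part_def by (intro sum.cong) auto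
  finally show ?thesis .
qed

theorem ip_self_pos:
  assumes "spherical n adj" and "diagram n adj" and "m \<in> {1..n}" and "x m \<noteq> 0"
  shows "ip n adj x x > 0"
proof -
  define c where "c k = inv_form n adj (simple_root k) (simple_root k)" for k
  let ?x = "\<lambda>v. level_part n c v x"
  have c_pos: "c k > 0" if "k \<in> {1..n}" for k
    unfolding c_def using inv_form_self_pos[OF assms(1) that] by (simp add: simple_root_def)
  have scaled: "2 * inv_form n adj (?x v) (?x v) = v * ip n adj (?x v) (?x v)" for v
    by (rule inv_form_eq_scaled_ip) (auto simp: level_part_def c_def)
  have "ip n adj (?x v) (?x v) \<ge> 0" if "v \<in> c ` {1..n}" for v
  proof -
    have "v > 0"
      using that c_pos by auto
    moreover have "v * ip n adj (?x v) (?x v) \<ge> 0"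
      using scaled[of v] inv_form_self_nonneg[of n adj "?x v"] by linarith
    ultimately show ?thesis
      by (simp add: zero_le_mult_iff)
  qed
  moreover have "ip n adj (?x (c m)) (?x (c m)) > 0"
  proof -
    have "inv_form n adj (?x (c m)) (?x (c m)) > 0"
      using inv_form_self_pos[OF assms(1,3)] assms(3,4) by (simp add: level_part_def)
    then have "c m * ip n adj (?x (c m)) (?x (c m)) > 0"
      using scaled[of "c m"] by linarith
    then show ?thesis
      using c_pos[OF assms(3)] by (simp add: zero_less_mult_iff)
  qed
  moreover have "ip n adj x x = (\<Sum>v\<in>c ` {1..n}. ip n adj (?x v) (?x v))"
    using inv_form_simple_root_self_adjacent[OF assms(2)] unfolding c_def
    by (intro ip_self_eq_sum_level_parts) blast
  ultimately show ?thesis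
    using assms(3) by (auto intro!: sum_pos2[where i = "c m"])
qed

lemma even_sum_sum_symmetric:
  fixes g :: "'a \<Rightarrow> 'a \<Rightarrow> 'b :: ring_parity"
  assumes "finite S" and "\<And>k l. g k l = g l k" and "\<And>k. even (g k k)"
  shows "even (\<Sum>k\<in>S. \<Sum>l\<in>S. g k l)"
  using assms(1)
proof (induction S rule: finite_induct)
  case (insert a S)
  have "(\<Sum>k\<in>S. g k a) = (\<Sum>l\<in>S. g a l)"
    by (intro sum.cong refl assms(2))
  moreover have "(\<Sum>k\<in>insert a S. \<Sum>l\<in>insert a S. g k l)
      = g a a + (\<Sum>l\<in>S. g a l) + (\<Sum>k\<in>S. g k a) + (\<Sum>k\<in>S. \<Sum>l\<in>S. g k l)"
    using insert by (simp add: sum.distrib)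
  ultimately show ?case
    using insert assms(3) by simp
qed simp

lemma ip_self_even:
  assumes "diagram n adj"
  shows "even (ip n adj x x)"
  unfolding ip_def
proof (rule even_sum_sum_symmetric)
  show "x k * x l * cartan adj k l = x l * x k * cartan adj l k" for k l
    using cartan_commute[OF assms] by simp
  show "even (x k * x k * cartan adj k k)" for k
    by (simp add: cartan_def)
qed simp

lemma ip_self_ge_two:
  assumes "spherical n adj" and "diagram n adj" and "m \<in> {1..n}" and "x m \<noteq> 0"
  shows "ip n adj x x \<ge> 2"
proof -
  obtain b where "ip n adj x x = 2 * b"
    using ip_self_even[OF assms(2)] by (auto elim: evenE)
  then show ?thesis
    using ip_self_pos[OF assms(1-3), of x, OF assms(4)] by presburger
qed

lemma ip_self_eq_two_sign_coherent:
  assumes "spherical n adj" and "diagram n adj" and "ip n adj z z = 2"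
  shows "(\<forall>k\<in>{1..n}. z k \<ge> 0) \<or> (\<forall>k\<in>{1..n}. z k \<le> 0)"
proof (rule ccontr)
  assume "\<not> ?thesis"
  then obtain a b where a: "a \<in> {1..n}" "z a > 0" and b: "b \<in> {1..n}" "z b < 0"
    by (auto simp: not_le)
  define zp where "zp k = max (z k) 0" for k
  define zm where "zm k = max (- z k) 0" for k
  have "z = (\<lambda>k. zp k - zm k)"
    by (auto simp: zp_def zm_def)
  then have "ip n adj z z = ip n adj zp zp - 2 * ip n adj zp zm + ip n adj zm zm"
    by (simp add: ip_diff_left ip_diff_right ip_commute[OF assms(2), of zm zp])
  moreover have "ip n adj zp zm \<le> 0"
    unfolding ip_def
  proof (intro sum_nonpos ballI)
    fix k l
    show "zp k * zm l * cartan adj k l \<le> 0"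
    proof (cases "k = l")
      case False
      then have "cartan adj k l \<le> 0"
        by (simp add: cartan_def)
      moreover have "zp k * zm l \<ge> 0"
        by (simp add: zp_def zm_def)
      ultimately show ?thesis
        by (simp add: mult_nonneg_nonpos)
    qed (simp add: zp_def zm_def)
  qed
  moreover have "ip n adj zp zp \<ge> 2"
    using a by (intro ip_self_ge_two[OF assms(1,2) a(1)]) (simp add: zp_def)
  moreover have "ip n adj zm zm \<ge> 2"
    using b by (intro ip_self_ge_two[OF assms(1,2) b(1)]) (simp add: zm_def)
  ultimately show False
    using assms(3) by linarith
qed

theorem height_ne_zero_if_ip_self_eq_two:
  assumes "spherical n adj" and "diagram n adj" and "ip n adj z z = 2"
  shows "height n z \<noteq> 0"
proof
  assume height: "height n z = 0"
  have "\<forall>k\<in>{1..n}. z k = 0"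
    using ip_self_eq_two_sign_coherent[OF assms]
  proof
    assume "\<forall>k\<in>{1..n}. z k \<ge> 0"
    then show ?thesis
      using height sum_nonneg_eq_0_iff[of "{1..n}" z] by (simp add: height_def)
  next
    assume "\<forall>k\<in>{1..n}. z k \<le> 0"
    then show ?thesis
      using height sum_nonneg_eq_0_iff[of "{1..n}" "\<lambda>k. - z k"]
      by (simp add: height_def sum_negf)
  qed
  then have "ip n adj z z = 0"
    by (simp add: ip_def)
  with assms(3) show False
    by simp
qed

lemma orthogonal_roots_height_ne_plus_one:
  assumes "spherical n adj" and "diagram n adj"
    and "\<beta> \<in> roots n adj" and "\<gamma> \<in> roots n adj" and "ip n adj \<beta> \<gamma> = 0"
    and "i \<in> {1..n}" and "ip n adj (simple_root i) \<beta> = 1" and "ip n adj (simple_root i) \<gamma> = -1"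
  shows "height n \<beta> \<noteq> height n \<gamma> + 1"
proof -
  define d where "d = (\<lambda>k. \<beta> k - simple_root i k - \<gamma> k)"
  have "ip n adj \<gamma> \<beta> = 0" and "ip n adj \<beta> (simple_root i) = 1"
    and "ip n adj \<gamma> (simple_root i) = -1"
    using assms(5,7,8) ip_commute[OF assms(2)] by metis+
  then have "ip n adj d d = 2"
    using assms by (simp add: d_def ip_diff_left ip_diff_right ip_root_self ip_simple_root_self)
  then have "height n d \<noteq> 0"
    by (rule height_ne_zero_if_ip_self_eq_two[OF assms(1,2)])
  then show ?thesis
    using assms(6) by (simp add: d_def height_diff height_simple_root)
qed

lemma orthogonal_roots_height_ne_plus_two:
  assumes "spherical n adj" and "diagram n adj"
    and "\<beta> \<in> roots n adj" and "\<gamma> \<in> roots n adj" and "ip n adj \<beta> \<gamma> = 0"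
    and "i \<in> {1..n}" and "j \<in> {1..n}" and "adj i j"
    and "ip n adj (simple_root i) \<beta> = 0" and "ip n adj (simple_root i) \<gamma> = 0"
    and "ip n adj (simple_root j) \<beta> = -1" and "ip n adj (simple_root j) \<gamma> = 1"
  shows "height n \<gamma> \<noteq> height n \<beta> + 2"
proof -
  define d where "d = (\<lambda>k. \<gamma> k - \<beta> k - simple_root i k - simple_root j k)"
  have "i \<noteq> j"
    using assms(2,8) by (auto simp: diagram_def)
  then have "ip n adj (simple_root i) (simple_root j) = -1"
    using assms(6-8) by (simp add: ip_simple_roots cartan_def)
  moreover have "ip n adj \<gamma> \<beta> = 0" and "ip n adj \<beta> (simple_root i) = 0"
    and "ip n adj \<gamma> (simple_root i) = 0" and "ip n adj \<beta> (simple_root j) = -1"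
    and "ip n adj \<gamma> (simple_root j) = 1"
    using assms(5,9-12) ip_commute[OF assms(2)] by metis+
  moreover have "ip n adj (simple_root j) (simple_root i) = -1"
    using calculation(1) ip_commute[OF assms(2)] by metis
  ultimately have "ip n adj d d = 2"
    using assms by (simp add: d_def ip_diff_left ip_diff_right ip_root_self ip_simple_root_self)
  then have "height n d \<noteq> 0"
    by (rule height_ne_zero_if_ip_self_eq_two[OF assms(1,2)])
  then show ?thesis
    using assms(6,7) by (simp add: d_def height_diff height_simple_root)
qed

theorem proposition2p1:
  fixes n :: nat and adj :: "nat \<Rightarrow> nat \<Rightarrow> bool"
    and B :: "(nat \<Rightarrow> int) set" and \<beta> \<gamma> :: "nat \<Rightarrow> int" and j :: nat
  assumes "diagram n adj" and "spherical n adj"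
    and "B \<subseteq> pos_roots n adj"
    and "\<forall>x\<in>B. \<forall>y\<in>B. x \<noteq> y \<longrightarrow> ip n adj x y = 0"
    and "\<beta> \<in> B" and "\<gamma> \<in> B" and "j \<in> {1..n}"
  shows "\<not> (\<exists>i\<in>{1..n}. ip n adj (simple_root i) \<beta> = 1 \<and> ip n adj (simple_root i) \<gamma> = -1
              \<and> height n \<beta> = height n \<gamma> + 1)
       \<and> (ip n adj (simple_root j) \<beta> = -1 \<and> ip n adj (simple_root j) \<gamma> = 1
           \<and> height n \<gamma> = height n \<beta> + 2
         \<longrightarrow> \<not> (\<exists>i\<in>{1..n}. (\<forall>b\<in>B. ip n adj (simple_root i) b = 0) \<and> adj i j))"
proof -
  have roots: "\<beta> \<in> roots n adj" "\<gamma> \<in> roots n adj"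
    using assms(3,5,6) by (auto simp: pos_roots_def)
  have orthogonal: "ip n adj \<beta> \<gamma> = 0" if "\<beta> \<noteq> \<gamma>"
    using assms(4-6) that by blast
  show ?thesis
  proof (intro conjI impI notI)
    assume "\<exists>i\<in>{1..n}. ip n adj (simple_root i) \<beta> = 1 \<and> ip n adj (simple_root i) \<gamma> = -1
      \<and> height n \<beta> = height n \<gamma> + 1"
    then show False
      using orthogonal_roots_height_ne_plus_one[OF assms(2,1) roots] orthogonal by force
  next
    assume "ip n adj (simple_root j) \<beta> = -1 \<and> ip n adj (simple_root j) \<gamma> = 1
      \<and> height n \<gamma> = height n \<beta> + 2"
      and "\<exists>i\<in>{1..n}. (\<forall>b\<in>B. ip n adj (simple_root i) b = 0) \<and> adj i j"
    then show False
      using orthogonal_roots_height_ne_plus_two[OF assms(2,1) roots _ _ assms(7)]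
        orthogonal assms(5,6)
      by force
  qed
qed

end
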